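(* The $k$ poles of a $k$-oriented Spherical Diagram do not all lie on a common great circle. Consequently, every attractor hull of a $k$-oriented SD has non-empty interior.
   Context: A geodesic arc on the unit sphere in $\mathbb R^3$ is the unique shortest curve joining two non-antipodal points. An arc $a$ blocks an arc $b$ (equivalently, $b$ hits $a$) if an endpoint of $b$ lies in the relative interior of $a$. A Spherical Diagram (SD) is a finite non-empty collection $\mathcal D$ of pairwise interior-disjoint geodesic arcs on the unit sphere such that each arc of $\mathcal D$ is blocked by arcs of $\mathcal D$ at each of its endpoints. An SD $\mathcal D$ is $k$-oriented if there exist a set $P$ of $k$ points on the unit sphere (poles), no two antipodal, and a function $f\colon\mathcal D\to P$ such that each arc $a\in\mathcal D$ lies on a great circle through $f(a)$ but contains neither $f(a)$ nor its antipode $-f(a)$ (the anti-pole of $f(a)$). An attractor of a $k$-oriented SD is a set of $k$ points, no two antipodal, chosen among its poles and anti-poles (i.e., one from each pair $\{p,-p\}$, $p\in P$). An attractor hull is the spherical convex hull of an attractor (which is the whole sphere if the attractor is not contained in any open hemisphere). *)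

theory Defs
  imports "HOL-Analysis.Analysis"
begin

type_synonym pt = "real^3"

abbreviation S2 :: "pt set" where "S2 \<equiv> sphere 0 1"

text \<open>An arc is represented by its ordered pair of endpoints (a, b); it is a valid
geodesic arc if a, b lie on the unit sphere, are distinct and not antipodal.\<close>
definition valid_arc :: "pt \<times> pt \<Rightarrow> bool" where
  "valid_arc ab \<longleftrightarrow> fst ab \<in> S2 \<and> snd ab \<in> S2 \<and> fst ab \<noteq> snd ab \<and> fst ab \<noteq> - snd ab"

text \<open>Point set of the (shortest) geodesic arc: central projection of the chord.\<close>
definition arc_set :: "pt \<times> pt \<Rightarrow> pt set" where
  "arc_set ab = {sgn ((1 - t) *\<^sub>R fst ab + t *\<^sub>R snd ab) | t. 0 \<le> t \<and> t \<le> 1}"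

definition arc_relint :: "pt \<times> pt \<Rightarrow> pt set" where
  "arc_relint ab = {sgn ((1 - t) *\<^sub>R fst ab + t *\<^sub>R snd ab) | t. 0 < t \<and> t < 1}"

definition blocks :: "pt \<times> pt \<Rightarrow> pt \<times> pt \<Rightarrow> bool" where
  "blocks a b \<longleftrightarrow> fst b \<in> arc_relint a \<or> snd b \<in> arc_relint a"

definition spherical_diagram :: "(pt \<times> pt) set \<Rightarrow> bool" where
  "spherical_diagram D \<longleftrightarrow>
     finite D \<and> D \<noteq> {} \<and> (\<forall>a\<in>D. valid_arc a) \<and>
     (\<forall>a\<in>D. \<forall>b\<in>D. a \<noteq> b \<longrightarrow> arc_relint a \<inter> arc_relint b = {}) \<and>
     (\<forall>a\<in>D. (\<exists>b\<in>D. fst a \<in> arc_relint b) \<and> (\<exists>b\<in>D. snd a \<in> arc_relint b))"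

definition great_circle :: "pt \<Rightarrow> pt set" where
  "great_circle n = {x \<in> S2. n \<bullet> x = 0}"

definition oriented_by :: "(pt \<times> pt) set \<Rightarrow> nat \<Rightarrow> pt set \<Rightarrow> (pt \<times> pt \<Rightarrow> pt) \<Rightarrow> bool" where
  "oriented_by D k P f \<longleftrightarrow>
     finite P \<and> card P = k \<and> P \<subseteq> S2 \<and> (\<forall>p\<in>P. - p \<notin> P) \<and>
     (\<forall>a\<in>D. f a \<in> P \<and>
        (\<exists>n. n \<noteq> 0 \<and> arc_set a \<subseteq> great_circle n \<and> f a \<in> great_circle n) \<and>
        f a \<notin> arc_set a \<and> - f a \<notin> arc_set a)"

definition k_oriented :: "nat \<Rightarrow> (pt \<times> pt) set \<Rightarrow> bool" where
  "k_oriented k D \<longleftrightarrow> spherical_diagram D \<and> (\<exists>P f. oriented_by D k P f)"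

definition attractor :: "pt set \<Rightarrow> pt set \<Rightarrow> bool" where
  "attractor P A \<longleftrightarrow> A \<subseteq> P \<union> uminus ` P \<and> (\<forall>p\<in>P. (p \<in> A) \<noteq> (- p \<in> A))"

definition in_open_hemisphere :: "pt set \<Rightarrow> bool" where
  "in_open_hemisphere A \<longleftrightarrow> (\<exists>n. \<forall>x\<in>A. n \<bullet> x > 0)"

definition spherical_hull :: "pt set \<Rightarrow> pt set" where
  "spherical_hull A = (if in_open_hemisphere A
     then S2 \<inter> {t *\<^sub>R y | t y. t > 0 \<and> y \<in> convex hull A} else S2)"

definition sphere_interior :: "pt set \<Rightarrow> pt set" where
  "sphere_interior H = (subtopology euclidean S2) interior_of H"

end

theory Submission
  imports Defs
begin

text \<open>
Suppose all poles lie on the great circle \<open>n\<^sup>\<bottom>\<close>. Every arc lies on a great circle through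
its pole, which meets \<open>n\<^sup>\<bottom>\<close> only in the pole and its antipode; the arc avoids both, so an
arc not contained in \<open>n\<^sup>\<bottom>\<close> lies in an open hemisphere bounded by \<open>n\<^sup>\<bottom>\<close>.
Among the arc endpoints with \<open>n \<bullet> x > 0\<close> take one of least height. It is blocked by an arc
whose endpoints are then both at least as high, while interior points of an arc in an open
hemisphere are strictly higher than its lower endpoint: a contradiction. So all arcs lie in
\<open>n\<^sup>\<bottom>\<close>, but then an arc starting inside the arc that blocks it overlaps that arc.

Hence the poles span \<open>\<real>\<^sup>3\<close>, and so does every attractor. A basis taken from the attractor
spans a simplex with the origin whose open cone meets the sphere in an open subset of the
attractor hull.
\<close>

lemma in_span_pair_iff: "x \<in> span {u, v} \<longleftrightarrow> (\<exists>\<alpha> \<beta>. x = \<alpha> *\<^sub>R u + \<beta> *\<^sub>R v)"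
proof
  assume "x \<in> span {u, v}"
  then obtain \<alpha> \<beta> where "x - \<alpha> *\<^sub>R u = \<beta> *\<^sub>R v"
    by (auto simp: span_breakdown_eq span_singleton)
  then show "\<exists>\<alpha> \<beta>. x = \<alpha> *\<^sub>R u + \<beta> *\<^sub>R v"
    by (metis diff_add_cancel add.commute)
next
  assume "\<exists>\<alpha> \<beta>. x = \<alpha> *\<^sub>R u + \<beta> *\<^sub>R v"
  then show "x \<in> span {u, v}"
    by (auto intro: span_add span_scale span_base)
qed

lemma unit_notin_span_unit:
  fixes u v :: "'a::real_normed_vector"
  assumes "norm u = 1" "norm v = 1" "u \<noteq> v" "u \<noteq> - v"
  shows "u \<notin> span {v}"
proof
  assume "u \<in> span {v}"
  then obtain c where c: "u = c *\<^sub>R v"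
    by (auto simp: span_singleton)
  then have "\<bar>c\<bar> = 1"
    using assms by simp
  then show False
    using c assms by (auto simp: abs_if split: if_splits)
qed

lemma independent_unit_pair:
  fixes u v :: "'a::real_normed_vector"
  assumes "norm u = 1" "norm v = 1" "u \<noteq> v" "u \<noteq> - v"
  shows "independent {u, v}"
  using unit_notin_span_unit[OF assms] assms(2)
  by (intro independent_insertI) (auto simp: independent_empty)

lemma plane_subset_span_pair:
  fixes m u v :: "real^3"
  assumes "m \<noteq> 0" "m \<bullet> u = 0" "m \<bullet> v = 0" "independent {u, v}" "u \<noteq> v"
  shows "{x. m \<bullet> x = 0} \<subseteq> span {u, v}"
  using assms by (intro card_ge_dim_independent) (auto simp: dim_hyperplane)

lemma great_circle_inter_plane_antipodal:
  assumes "m \<noteq> 0" and p: "p \<in> great_circle m" "n \<bullet> p = 0"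
    and e: "e \<in> great_circle m" "n \<bullet> e \<noteq> 0"
    and x: "x \<in> great_circle m" "n \<bullet> x = 0"
  shows "x = p \<or> x = - p"
proof -
  have "p \<noteq> 0"
    using p by (auto simp: great_circle_def)
  moreover have "e \<notin> span {p}"
    using p e by (auto simp: span_singleton)
  ultimately have "independent {e, p}"
    by (intro independent_insertI) (auto simp: independent_empty)
  have "e \<noteq> p"
    using \<open>e \<notin> span {p}\<close> span_base by blast
  have "x \<in> span {e, p}"
    using plane_subset_span_pair[OF \<open>m \<noteq> 0\<close> _ _ \<open>independent {e, p}\<close> \<open>e \<noteq> p\<close>] p e x
    by (auto simp: great_circle_def)
  then obtain \<alpha> \<beta> where x_eq: "x = \<alpha> *\<^sub>R e + \<beta> *\<^sub>R p"
    by (auto simp: in_span_pair_iff)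
  have "\<alpha> * (n \<bullet> e) = 0"
    using x p by (simp add: x_eq inner_add_right)
  then have "x = \<beta> *\<^sub>R p"
    using e by (simp add: x_eq)
  moreover have "\<bar>\<beta>\<bar> = 1"
    using x p calculation by (simp add: great_circle_def)
  ultimately show ?thesis
    by (auto simp: abs_if split: if_splits)
qed

lemma spherical_diagramD:
  assumes "spherical_diagram D"
  shows "finite D" "D \<noteq> {}" "a \<in> D \<Longrightarrow> valid_arc a"
    "a \<in> D \<Longrightarrow> b \<in> D \<Longrightarrow> a \<noteq> b \<Longrightarrow> arc_relint a \<inter> arc_relint b = {}"
    "a \<in> D \<Longrightarrow> \<exists>b\<in>D. fst a \<in> arc_relint b"
    "a \<in> D \<Longrightarrow> \<exists>b\<in>D. snd a \<in> arc_relint b"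
  using assms unfolding spherical_diagram_def by blast+

lemma arc_relint_subset_arc_set: "arc_relint a \<subseteq> arc_set a"
  by (auto simp: arc_relint_def arc_set_def)

lemma valid_arc_chord_nonzero:
  assumes "valid_arc a" "0 \<le> t" "t \<le> 1"
  shows "(1 - t) *\<^sub>R fst a + t *\<^sub>R snd a \<noteq> 0"
proof
  assume "(1 - t) *\<^sub>R fst a + t *\<^sub>R snd a = 0"
  then have e: "(1 - t) *\<^sub>R fst a = - (t *\<^sub>R snd a)"
    by (simp add: eq_neg_iff_add_eq_0)
  then have "norm ((1 - t) *\<^sub>R fst a) = norm (t *\<^sub>R snd a)"
    by simp
  then have "t = 1 / 2"
    using assms by (simp add: valid_arc_def)
  then have "(1 / 2) *\<^sub>R fst a = (1 / 2) *\<^sub>R (- snd a)"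
    using e unfolding \<open>t = 1 / 2\<close> by simp
  then have "fst a = - snd a"
    by (rule scaleR_left_imp_eq[rotated]) simp
  then show False
    using assms by (simp add: valid_arc_def)
qed

lemma norm_chord_less_one:
  fixes x y :: "'a::real_inner"
  assumes "norm x = 1" "norm y = 1" "x \<noteq> y" "0 < s" "s < 1"
  shows "norm ((1 - s) *\<^sub>R x + s *\<^sub>R y) < 1"
proof -
  have unit: "x \<bullet> x = 1" "y \<bullet> y = 1"
    using assms(1,2) by (simp_all add: dot_square_norm)
  have "0 < (x - y) \<bullet> (x - y)"
    using assms(3) by simp
  then have "x \<bullet> y < 1"
    using unit by (simp add: inner_diff inner_commute)
  have "(norm ((1 - s) *\<^sub>R x + s *\<^sub>R y))\<^sup>2 = (1 - s)\<^sup>2 + s\<^sup>2 + 2 * s * (1 - s) * (x \<bullet> y)"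
    unfolding power2_norm_eq_inner
    using unit by (simp add: inner_commute power2_eq_square algebra_simps)
  also have "\<dots> < ((1 - s) + s)\<^sup>2"
  proof -
    have "2 * s * (1 - s) * (x \<bullet> y) < 2 * s * (1 - s)"
      using \<open>x \<bullet> y < 1\<close> assms(4,5) by simp
    then show ?thesis
      by (simp add: power2_eq_square algebra_simps)
  qed
  finally show ?thesis
    by (simp add: abs_square_less_1)
qed

lemma fst_notin_arc_relint:
  assumes "valid_arc a"
  shows "fst a \<notin> arc_relint a"
proof
  assume "fst a \<in> arc_relint a"
  then obtain s where s: "0 < s" "s < 1" and eq: "fst a = sgn ((1 - s) *\<^sub>R fst a + s *\<^sub>R snd a)"
    by (auto simp: arc_relint_def)
  define w where "w = (1 - s) *\<^sub>R fst a + s *\<^sub>R snd a"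
  have "w \<noteq> 0"
    using valid_arc_chord_nonzero[OF assms, of s] s by (simp add: w_def)
  then have "w = norm w *\<^sub>R fst a"
    using eq by (simp add: w_def[symmetric] sgn_div_norm)
  then have "s *\<^sub>R snd a = (norm w - (1 - s)) *\<^sub>R fst a"
    by (simp add: w_def algebra_simps)
  then have "s *\<^sub>R snd a \<in> span {fst a}"
    by (simp add: span_base span_scale)
  then have "snd a \<in> span {fst a}"
    using s span_scale[of "s *\<^sub>R snd a" "{fst a}" "1 / s"] by simp
  then show False
    using unit_notin_span_unit[of "snd a" "fst a"] assms by (auto simp: valid_arc_def equation_minus_iff)
qed

lemma sgn_pos_combination_in_arc_relint:
  assumes "0 < L" "0 < M"
  shows "sgn (L *\<^sub>R fst b + M *\<^sub>R snd b) \<in> arc_relint b"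
proof -
  define u where "u = M / (L + M)"
  have "(L + M) * (1 - u) = L" "(L + M) * u = M"
    using assms by (simp_all add: u_def field_simps)
  then have "L *\<^sub>R fst b + M *\<^sub>R snd b = (L + M) *\<^sub>R ((1 - u) *\<^sub>R fst b + u *\<^sub>R snd b)"
    by (simp add: scaleR_add_right)
  then have "sgn (L *\<^sub>R fst b + M *\<^sub>R snd b) = sgn ((1 - u) *\<^sub>R fst b + u *\<^sub>R snd b)"
    using assms by (simp add: sgn_scaleR)
  moreover have "0 < u" "u < 1"
    using assms by (auto simp: u_def)
  ultimately show ?thesis
    by (auto simp: arc_relint_def)
qed

lemma arc_meets_plane:
  assumes "valid_arc a" "(n \<bullet> fst a) * (n \<bullet> snd a) \<le> 0"
  shows "\<exists>x\<in>arc_set a. n \<bullet> x = 0"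
proof -
  have "\<exists>x\<in>arc_set a. n \<bullet> x = 0" if "0 \<le> n \<bullet> fst a" "n \<bullet> snd a \<le> 0" for n
  proof -
    define t where "t = (n \<bullet> fst a) / (n \<bullet> fst a - n \<bullet> snd a)"
    have t: "0 \<le> t" "t \<le> 1"
      using that by (auto simp: t_def divide_le_eq_1)
    have "n \<bullet> ((1 - t) *\<^sub>R fst a + t *\<^sub>R snd a) = (1 - t) * (n \<bullet> fst a) + t * (n \<bullet> snd a)"
      by (simp add: inner_add_right)
    also have "\<dots> = 0"
      using that by (cases "n \<bullet> fst a = n \<bullet> snd a") (auto simp: t_def field_simps)
    finally have "n \<bullet> ((1 - t) *\<^sub>R fst a + t *\<^sub>R snd a) = 0" .
    then have "n \<bullet> sgn ((1 - t) *\<^sub>R fst a + t *\<^sub>R snd a) = 0"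
      by (simp add: sgn_div_norm)
    then show ?thesis
      using t by (auto simp: arc_set_def)
  qed
  from this[of n] this[of "- n"] assms(2) show ?thesis
    by (auto simp: mult_le_0_iff)
qed

lemma arc_relint_above_lower_endpoint:
  assumes "valid_arc b" "0 < n \<bullet> fst b" "0 < n \<bullet> snd b" "x \<in> arc_relint b"
  shows "min (n \<bullet> fst b) (n \<bullet> snd b) < n \<bullet> x"
proof -
  obtain s where s: "0 < s" "s < 1" and x: "x = sgn ((1 - s) *\<^sub>R fst b + s *\<^sub>R snd b)"
    using assms(4) by (auto simp: arc_relint_def)
  define w where "w = (1 - s) *\<^sub>R fst b + s *\<^sub>R snd b"
  have "(1 - s) * min (n \<bullet> fst b) (n \<bullet> snd b) + s * min (n \<bullet> fst b) (n \<bullet> snd b)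
      \<le> (1 - s) * (n \<bullet> fst b) + s * (n \<bullet> snd b)"
    using s by (intro add_mono mult_left_mono) auto
  then have min_le: "min (n \<bullet> fst b) (n \<bullet> snd b) \<le> n \<bullet> w"
    by (simp add: w_def algebra_simps)
  have "0 < norm w" "norm w < 1"
    using valid_arc_chord_nonzero[OF assms(1), of s] norm_chord_less_one[of "fst b" "snd b" s] assms(1) s
    by (auto simp: w_def valid_arc_def)
  moreover have "0 < n \<bullet> w"
    using min_le assms(2,3) by linarith
  ultimately have "n \<bullet> w < n \<bullet> w / norm w"
    by (simp add: less_divide_eq)
  also have "\<dots> = n \<bullet> x"
    by (simp add: x w_def sgn_div_norm divide_inverse_commute)
  finally show ?thesis
    using min_le by simp
qed

lemma pole_arc_endpoints_above:
  assumes b: "valid_arc b" "arc_set b \<subseteq> great_circle m" "m \<noteq> 0"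
    and p: "p \<in> great_circle m" "p \<notin> arc_set b" "- p \<notin> arc_set b" "n \<bullet> p = 0"
    and x: "x \<in> arc_relint b" "0 < n \<bullet> x"
  shows "0 < n \<bullet> fst b \<and> 0 < n \<bullet> snd b"
proof -
  have x_arc: "x \<in> arc_set b"
    using x arc_relint_subset_arc_set by blast
  have "n \<bullet> y \<noteq> 0" if "y \<in> arc_set b" for y
    using great_circle_inter_plane_antipodal[OF \<open>m \<noteq> 0\<close> p(1,4), of x y] x_arc that b(2) p(2,3) x(2) by auto
  then have "0 < (n \<bullet> fst b) * (n \<bullet> snd b)"
    using arc_meets_plane[OF b(1), of n] by force
  moreover have "\<not> (n \<bullet> fst b < 0 \<and> n \<bullet> snd b < 0)"
    using arc_relint_above_lower_endpoint[OF b(1), of "- n" x] x by auto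
  ultimately show ?thesis
    by (auto simp: zero_less_mult_iff)
qed

lemma oriented_diagram_below_pole_plane:
  assumes D: "spherical_diagram D" and P: "oriented_by D k P f" and n: "\<forall>p\<in>P. n \<bullet> p = 0"
  shows "\<forall>a\<in>D. n \<bullet> fst a \<le> 0 \<and> n \<bullet> snd a \<le> 0"
proof (rule ccontr)
  define E where "E = {x \<in> fst ` D \<union> snd ` D. 0 < n \<bullet> x}"
  assume "\<not> ?thesis"
  then have "E \<noteq> {}"
    by (force simp: E_def)
  moreover have "finite E"
    using spherical_diagramD(1)[OF D] by (simp add: E_def)
  ultimately obtain e where "e \<in> E" and e_min: "\<forall>x\<in>E. n \<bullet> e \<le> n \<bullet> x"
    using arg_min_if_finite[of E "\<lambda>x. n \<bullet> x"] by (metis not_le)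
  then obtain a where "a \<in> D" "e = fst a \<or> e = snd a" "0 < n \<bullet> e"
    by (auto simp: E_def)
  then obtain b where "b \<in> D" and e: "e \<in> arc_relint b" "0 < n \<bullet> e"
    using spherical_diagramD(5,6)[OF D] by blast
  then have b: "valid_arc b"
    using spherical_diagramD(3)[OF D] by blast
  obtain m where "m \<noteq> 0" "arc_set b \<subseteq> great_circle m" "f b \<in> great_circle m"
    and "f b \<notin> arc_set b" "- f b \<notin> arc_set b" "n \<bullet> f b = 0"
    using P n \<open>b \<in> D\<close> by (auto simp: oriented_by_def)
  then have "0 < n \<bullet> fst b \<and> 0 < n \<bullet> snd b"
    using pole_arc_endpoints_above[OF b] e by blast
  then have "fst b \<in> E" "snd b \<in> E"
    using \<open>b \<in> D\<close> by (auto simp: E_def)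
  then have "n \<bullet> e \<le> min (n \<bullet> fst b) (n \<bullet> snd b)"
    using e_min by simp
  then show False
    using arc_relint_above_lower_endpoint[OF b _ _ e(1), of n] \<open>0 < n \<bullet> fst b \<and> 0 < n \<bullet> snd b\<close>
    by (auto simp: min_less_iff_disj)
qed

lemma spherical_diagram_not_in_plane:
  assumes D: "spherical_diagram D" and "n \<noteq> 0"
  shows "\<exists>a\<in>D. n \<bullet> fst a \<noteq> 0 \<or> n \<bullet> snd a \<noteq> 0"
proof (rule ccontr)
  assume "\<not> ?thesis"
  then have plane: "\<forall>a\<in>D. n \<bullet> fst a = 0 \<and> n \<bullet> snd a = 0"
    by simp
  obtain a where "a \<in> D"
    using spherical_diagramD(2)[OF D] by blast
  then obtain b where "b \<in> D" and a_b: "fst a \<in> arc_relint b"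
    using spherical_diagramD(5)[OF D] by blast
  have a: "valid_arc a" and b: "valid_arc b"
    using spherical_diagramD(3)[OF D] \<open>a \<in> D\<close> \<open>b \<in> D\<close> by blast+
  have "a \<noteq> b"
    using fst_notin_arc_relint[OF a] a_b by auto
  have "independent {fst b, snd b}" "fst b \<noteq> snd b"
    using independent_unit_pair[of "fst b" "snd b"] b by (auto simp: valid_arc_def)
  then have "snd a \<in> span {fst b, snd b}"
    using plane_subset_span_pair[OF \<open>n \<noteq> 0\<close>] plane \<open>a \<in> D\<close> \<open>b \<in> D\<close> by blast
  then obtain \<alpha> \<beta> where snd_a: "snd a = \<alpha> *\<^sub>R fst b + \<beta> *\<^sub>R snd b"
    by (auto simp: in_span_pair_iff)
  obtain s where s: "0 < s" "s < 1" and fst_a_sgn: "fst a = sgn ((1 - s) *\<^sub>R fst b + s *\<^sub>R snd b)"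
    using a_b by (auto simp: arc_relint_def)
  define \<rho> where "\<rho> = norm ((1 - s) *\<^sub>R fst b + s *\<^sub>R snd b)"
  have "0 < \<rho>"
    using valid_arc_chord_nonzero[OF b, of s] s by (simp add: \<rho>_def)
  define \<gamma> \<delta> where "\<gamma> = (1 - s) / \<rho>" and "\<delta> = s / \<rho>"
  have "0 < \<gamma>" "0 < \<delta>"
    using s \<open>0 < \<rho>\<close> by (simp_all add: \<gamma>_def \<delta>_def)
  have fst_a: "fst a = \<gamma> *\<^sub>R fst b + \<delta> *\<^sub>R snd b"
    by (simp add: fst_a_sgn \<gamma>_def \<delta>_def \<rho>_def sgn_div_norm scaleR_add_right divide_inverse_commute)
  text \<open>Near its start, \<open>a\<close> keeps positive coordinates with respect to \<open>fst b, snd b\<close>.\<close>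
  have "\<forall>\<^sub>F t in at_right 0. 0 < (1 - t) * c + t * d" if "0 < c" for c d :: real
  proof (rule order_tendstoD(1))
    show "((\<lambda>t. (1 - t) * c + t * d) \<longlongrightarrow> c) (at_right 0)"
      by (auto intro!: tendsto_eq_intros)
  qed (fact that)
  then have "\<forall>\<^sub>F t in at_right 0.
      t \<in> {0<..<1} \<and> 0 < (1 - t) * \<gamma> + t * \<alpha> \<and> 0 < (1 - t) * \<delta> + t * \<beta>"
    using eventually_at_right_real[OF zero_less_one] \<open>0 < \<gamma>\<close> \<open>0 < \<delta>\<close>
    by (intro eventually_conj) auto
  then have "\<exists>t. t \<in> {0<..<1} \<and>
      0 < (1 - t) * \<gamma> + t * \<alpha> \<and> 0 < (1 - t) * \<delta> + t * \<beta>"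
    by (rule eventually_happens'[rotated]) simp
  then obtain t where t: "0 < t" "t < 1" "0 < (1 - t) * \<gamma> + t * \<alpha>" "0 < (1 - t) * \<delta> + t * \<beta>"
    by auto
  define x where "x = sgn ((1 - t) *\<^sub>R fst a + t *\<^sub>R snd a)"
  have "x \<in> arc_relint a"
    using t by (auto simp: x_def arc_relint_def)
  moreover have "(1 - t) *\<^sub>R fst a + t *\<^sub>R snd a
      = ((1 - t) * \<gamma> + t * \<alpha>) *\<^sub>R fst b + ((1 - t) * \<delta> + t * \<beta>) *\<^sub>R snd b"
    by (simp add: fst_a snd_a algebra_simps)
  then have "x \<in> arc_relint b"
    using sgn_pos_combination_in_arc_relint[OF t(3,4)] by (simp add: x_def)
  ultimately show False
    using spherical_diagramD(4)[OF D \<open>a \<in> D\<close> \<open>b \<in> D\<close> \<open>a \<noteq> b\<close>] by blast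
qed

lemma poles_not_on_great_circle:
  assumes D: "spherical_diagram D" and P: "oriented_by D k P f" and "n \<noteq> 0"
  shows "\<not> P \<subseteq> great_circle n"
proof
  assume "P \<subseteq> great_circle n"
  then have "\<forall>p\<in>P. n \<bullet> p = 0" "\<forall>p\<in>P. (- n) \<bullet> p = 0"
    by (auto simp: great_circle_def)
  from this[THEN oriented_diagram_below_pole_plane[OF D P]]
  have "\<forall>a\<in>D. n \<bullet> fst a = 0 \<and> n \<bullet> snd a = 0"
    by force
  then show False
    using spherical_diagram_not_in_plane[OF D \<open>n \<noteq> 0\<close>] by blast
qed

lemma span_eq_UNIV_if_not_on_great_circle:
  assumes "S \<subseteq> S2" "\<And>n. n \<noteq> 0 \<Longrightarrow> \<not> S \<subseteq> great_circle n"
  shows "span S = UNIV"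
proof (rule ccontr)
  assume "span S \<noteq> UNIV"
  then obtain n where "n \<noteq> 0" "\<forall>x\<in>span S. n \<bullet> x = 0"
    using span_not_UNIV_orthogonal by blast
  then have "S \<subseteq> great_circle n"
    using assms(1) span_base by (fastforce simp: great_circle_def)
  then show False
    using assms(2) \<open>n \<noteq> 0\<close> by blast
qed

lemma span_attractor:
  assumes "attractor P A"
  shows "span A = span P"
proof -
  have "A \<subseteq> span P"
    using assms by (auto simp: attractor_def intro: span_base span_neg)
  moreover have "P \<subseteq> span A"
  proof
    fix p assume "p \<in> P"
    then have "p \<in> A \<or> - p \<in> A"
      using assms by (auto simp: attractor_def)
    then show "p \<in> span A"
      by (metis span_base span_neg minus_minus)
  qed
  ultimately show ?thesis
    by (simp add: span_eq)
qed

lemma cone_over_simplex_subset_spherical_hull: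
  assumes "B \<subseteq> A" "B \<noteq> {}" "x \<in> convex hull (insert 0 B)" "0 < t" "t *\<^sub>R x \<in> S2"
  shows "t *\<^sub>R x \<in> spherical_hull A"
proof -
  obtain v y where "0 \<le> v" "y \<in> convex hull B" "x = v *\<^sub>R y"
    using assms(3) by (auto simp: convex_hull_insert[OF \<open>B \<noteq> {}\<close>])
  moreover have "y \<in> convex hull A"
    using \<open>B \<subseteq> A\<close> \<open>y \<in> convex hull B\<close> hull_mono by blast
  moreover have "0 < t * v"
    using assms(4,5) \<open>0 \<le> v\<close> \<open>x = v *\<^sub>R y\<close> by (auto simp: less_le)
  ultimately show ?thesis
    using assms(5) by (auto simp: spherical_hull_def)
qed

lemma sphere_interior_spherical_hull_nonempty:
  assumes "span A = UNIV"
  shows "sphere_interior (spherical_hull A) \<noteq> {}"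
proof -
  obtain B where "B \<subseteq> A" "independent B" "A \<subseteq> span B"
    using maximal_independent_subset by blast
  then have "span B = UNIV"
    using assms by (metis span_mono span_span top.extremum_uniqueI)
  then have "finite B" "card B = DIM(pt)"
    using \<open>independent B\<close> basis_card_eq_dim[of B UNIV] by (auto simp: finiteI_independent)
  define W where "W = interior (convex hull (insert 0 B))"
  have "open W"
    by (simp add: W_def)
  obtain w0 where "w0 \<in> W"
    using interior_simplex_nonempty[OF \<open>independent B\<close> \<open>finite B\<close> \<open>card B = DIM(pt)\<close>]
    by (auto simp: W_def)
  moreover have "W \<noteq> {0}"
    using \<open>open W\<close> not_open_singleton[of "0::pt"] by metis
  ultimately obtain w where "w \<in> W" "w \<noteq> 0"
    by blast
  define U where "U = (\<Union>t\<in>{0<..}. (\<lambda>x. t *\<^sub>R x) ` W)"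
  have "open U"
    using \<open>open W\<close> by (auto simp: U_def intro!: open_UN open_scaling)
  have "B \<noteq> {}"
    using \<open>card B = DIM(pt)\<close> by auto
  have "S2 \<inter> U \<subseteq> spherical_hull A"
  proof
    fix r assume "r \<in> S2 \<inter> U"
    then obtain t x where "0 < t" "x \<in> W" "r = t *\<^sub>R x" "r \<in> S2"
      by (auto simp: U_def)
    then show "r \<in> spherical_hull A"
      using cone_over_simplex_subset_spherical_hull[OF \<open>B \<subseteq> A\<close> \<open>B \<noteq> {}\<close>] interior_subset
      by (auto simp: W_def)
  qed
  then have "S2 \<inter> U \<subseteq> sphere_interior (spherical_hull A)"
    unfolding sphere_interior_def using \<open>open U\<close>
    by (intro interior_of_maximal) (auto simp: openin_open_Int)
  moreover have "sgn w \<in> S2 \<inter> U"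
    using \<open>w \<in> W\<close> \<open>w \<noteq> 0\<close>
    by (auto simp: U_def norm_sgn sgn_div_norm intro!: bexI[of _ "inverse (norm w)"])
  ultimately show ?thesis
    by blast
qed

theorem mainTheorem13:
  assumes "spherical_diagram D" and "oriented_by D k P f"
  shows "\<not> (\<exists>n::real^3. n \<noteq> 0 \<and> P \<subseteq> great_circle n) \<and>
         (\<forall>A. attractor P A \<longrightarrow> sphere_interior (spherical_hull A) \<noteq> {})"
proof -
  have "span P = UNIV"
    using assms(2) poles_not_on_great_circle[OF assms]
    by (intro span_eq_UNIV_if_not_on_great_circle) (auto simp: oriented_by_def)
  then show ?thesis
    using poles_not_on_great_circle[OF assms] span_attractor sphere_interior_spherical_hull_nonempty
    by metis
qed

end
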